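(* Let $z\ge 1$, $r\ge 1$ and $g\ge 3$ be integers. Then there exists a $[z,r;g]$-mixed graph.
   Context: A mixed graph is a finite graph that may contain both (undirected) edges and (directed) arcs. A $[z,r;g]$-mixed graph is a mixed graph in which every vertex is the tail of exactly $z$ arcs, the head of exactly $z$ arcs, and is incident with exactly $r$ edges, and whose girth is $g$. Walks are sequences $(v_0,\dots,v_n)$ where for each $i$, $v_iv_{i+1}$ is an edge or $(v_i,v_{i+1})$ is an arc (arcs may only be traversed in their direction, edges in either direction); a cycle is a closed such walk with no repeated vertex other than $v_0=v_n$ and no edge or arc used twice; the girth is the length of a shortest cycle. *)

theory Defs
  imports Main
begin

definition mixed_graph :: "'a set \<Rightarrow> 'a set set \<Rightarrow> ('a \<times> 'a) set \<Rightarrow> bool" where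
  "mixed_graph V E A \<longleftrightarrow> finite V
     \<and> (\<forall>e\<in>E. \<exists>u v. e = {u, v} \<and> u \<noteq> v \<and> u \<in> V \<and> v \<in> V)
     \<and> (\<forall>(u, v)\<in>A. u \<noteq> v \<and> u \<in> V \<and> v \<in> V)"

datatype 'a link = Edg "'a set" | Arc "'a \<times> 'a"

definition link_step :: "'a set set \<Rightarrow> ('a \<times> 'a) set \<Rightarrow> 'a link \<Rightarrow> 'a \<Rightarrow> 'a \<Rightarrow> bool" where
  "link_step E A l u v \<longleftrightarrow> (l = Edg {u, v} \<and> {u, v} \<in> E) \<or> (l = Arc (u, v) \<and> (u, v) \<in> A)"

definition is_cycle :: "'a set set \<Rightarrow> ('a \<times> 'a) set \<Rightarrow> 'a list \<Rightarrow> 'a link list \<Rightarrow> bool" where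
  "is_cycle E A vs ls \<longleftrightarrow> length ls \<ge> 1 \<and> length vs = length ls + 1
     \<and> hd vs = last vs \<and> distinct (butlast vs) \<and> distinct ls
     \<and> (\<forall>i < length ls. link_step E A (ls ! i) (vs ! i) (vs ! Suc i))"

definition has_girth :: "'a set set \<Rightarrow> ('a \<times> 'a) set \<Rightarrow> nat \<Rightarrow> bool" where
  "has_girth E A g \<longleftrightarrow> (\<exists>vs ls. is_cycle E A vs ls \<and> length ls = g)
     \<and> (\<forall>vs ls. is_cycle E A vs ls \<longrightarrow> g \<le> length ls)"

definition zrg_mixed_graph :: "nat \<Rightarrow> nat \<Rightarrow> nat \<Rightarrow> 'a set \<Rightarrow> 'a set set \<Rightarrow> ('a \<times> 'a) set \<Rightarrow> bool" where
  "zrg_mixed_graph z r g V E A \<longleftrightarrow> mixed_graph V E A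
     \<and> (\<forall>v\<in>V. card {w. (v, w) \<in> A} = z \<and> card {w. (w, v) \<in> A} = z
              \<and> card {e\<in>E. v \<in> e} = r)
     \<and> has_girth E A g"

end

theory Submission
  imports Defs "HOL-Library.Nat_Bijection"
begin

text \<open>For every r and k there is a finite r-regular graph of girth at least k: start from the
  complete graph on r + 1 vertices and iterate the cover on V \<times> 2^E in which (u, S) is joined to
  (w, S \<Delta> {uw}). A cycle of the cover projects to a closed non-backtracking walk that traverses
  every edge an even number of times. Its first repeated vertex closes a cycle of the base graph
  whose edges are pairwise distinct, so this cycle is not the whole walk and the walk is strictly
  longer than it.

  Given an r-regular graph G of girth at least g, take g layers of z copies of G each and add an
  arc from every copy of a vertex x in layer i to every copy of x in layer i + 1 mod g. Every
  vertex then has in- and out-degree z and r incident edges. Arcs advance the layer index and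
  edges keep it, so a cycle through an arc has a positive multiple of g arcs, while a cycle
  without arcs is a cycle of one copy of G.\<close>

definition ugraph :: "'a set \<Rightarrow> 'a set set \<Rightarrow> bool" where
  "ugraph V E \<longleftrightarrow> finite V \<and> (\<forall>e\<in>E. \<exists>u v. e = {u, v} \<and> u \<noteq> v \<and> u \<in> V \<and> v \<in> V)"

definition regular :: "'a set \<Rightarrow> 'a set set \<Rightarrow> nat \<Rightarrow> bool" where
  "regular V E r \<longleftrightarrow> (\<forall>v\<in>V. card {e\<in>E. v \<in> e} = r)"

definition ucycle :: "'a set set \<Rightarrow> (nat \<Rightarrow> 'a) \<Rightarrow> nat \<Rightarrow> bool" where
  "ucycle E w n \<longleftrightarrow> 3 \<le> n \<and> w n = w 0 \<and> inj_on w {..<n} \<and> (\<forall>t<n. {w t, w (Suc t)} \<in> E)"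

definition girth_ge :: "'a set set \<Rightarrow> nat \<Rightarrow> bool" where
  "girth_ge E k \<longleftrightarrow> (\<forall>w n. ucycle E w n \<longrightarrow> k \<le> n)"

definition complete_graph :: "'a set \<Rightarrow> 'a set set" where
  "complete_graph V = {{u, v} | u v. u \<in> V \<and> v \<in> V \<and> u \<noteq> v}"

lemma ugraph_edgeD:
  assumes "ugraph V E" and "{x, y} \<in> E"
  shows "x \<noteq> y" and "x \<in> V" and "y \<in> V"
proof -
  obtain u v where "{x, y} = {u, v}" "u \<noteq> v" "u \<in> V" "v \<in> V"
    using assms unfolding ugraph_def by blast
  then show "x \<noteq> y" "x \<in> V" "y \<in> V"
    by (auto simp: doubleton_eq_iff)
qed

lemma ugraph_edges_subset_Pow: "ugraph V E \<Longrightarrow> E \<subseteq> Pow V"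
  unfolding ugraph_def by auto

lemma ugraph_finite_edges: "ugraph V E \<Longrightarrow> finite E"
  using ugraph_edges_subset_Pow finite_subset[of E "Pow V"] unfolding ugraph_def by auto

lemma card_incident_edges_eq_card_neighbours:
  assumes "ugraph V E"
  shows "card {e\<in>E. v \<in> e} = card {w. {v, w} \<in> E}"
proof -
  have "bij_betw (\<lambda>w. {v, w}) {w. {v, w} \<in> E} {e\<in>E. v \<in> e}"
  proof (rule bij_betwI')
    fix e assume "e \<in> {e\<in>E. v \<in> e}"
    then obtain a b where "e = {a, b}" "e \<in> E" "v \<in> e"
      using assms unfolding ugraph_def by blast
    then show "\<exists>w\<in>{w. {v, w} \<in> E}. e = {v, w}"
      by (auto simp: insert_commute)
  qed (auto simp: doubleton_eq_iff)
  then show ?thesis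
    by (simp add: bij_betw_same_card)
qed

lemma ugraph_complete_graph: "finite V \<Longrightarrow> ugraph V (complete_graph V)"
  unfolding ugraph_def complete_graph_def by blast

lemma regular_complete_graph:
  assumes "finite V"
  shows "regular V (complete_graph V) (card V - 1)"
  unfolding regular_def
proof
  fix v assume "v \<in> V"
  have "{w. {v, w} \<in> complete_graph V} = V - {v}"
    using \<open>v \<in> V\<close> unfolding complete_graph_def by (auto simp: doubleton_eq_iff)
  then show "card {e \<in> complete_graph V. v \<in> e} = card V - 1"
    using \<open>v \<in> V\<close> assms
    by (simp add: card_incident_edges_eq_card_neighbours[OF ugraph_complete_graph[OF assms]])
qed

lemma ugraph_relabel:
  assumes "ugraph V E" and "inj_on f V"
  shows "ugraph (f ` V) ((`) f ` E)"
  unfolding ugraph_def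
proof (intro conjI ballI)
  show "finite (f ` V)"
    using assms(1) unfolding ugraph_def by simp
  fix e' assume "e' \<in> (`) f ` E"
  then obtain e where "e \<in> E" "e' = f ` e" by blast
  then obtain u v where "e = {u, v}" "u \<noteq> v" "u \<in> V" "v \<in> V"
    using assms(1) unfolding ugraph_def by blast
  then show "\<exists>u v. e' = {u, v} \<and> u \<noteq> v \<and> u \<in> f ` V \<and> v \<in> f ` V"
    using \<open>e' = f ` e\<close> inj_on_contraD[OF assms(2)] by blast
qed

lemma regular_relabel:
  assumes "ugraph V E" and "inj_on f V" and "regular V E r"
  shows "regular (f ` V) ((`) f ` E) r"
  unfolding regular_def
proof
  fix y assume "y \<in> f ` V"
  then obtain v where v: "v \<in> V" "y = f v" by blast
  have E_Pow: "E \<subseteq> Pow V"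
    using ugraph_edges_subset_Pow[OF assms(1)] .
  have mem: "f v \<in> f ` e \<longleftrightarrow> v \<in> e" if "e \<in> E" for e
    using inj_on_image_mem_iff[OF assms(2)] E_Pow v(1) that by blast
  have "{e'\<in>(`) f ` E. y \<in> e'} = (`) f ` {e\<in>E. v \<in> e}"
    using mem v(2) by auto
  moreover have "inj_on ((`) f) {e\<in>E. v \<in> e}"
    by (rule inj_on_subset[OF inj_on_image_Pow[OF assms(2)]]) (use E_Pow in auto)
  ultimately show "card {e'\<in>(`) f ` E. y \<in> e'} = r"
    using assms(3) v(1) unfolding regular_def by (simp add: card_image)
qed

lemma girth_ge_relabel:
  assumes "ugraph V E" and "inj_on f V" and "girth_ge E k"
  shows "girth_ge ((`) f ` E) k"
  unfolding girth_ge_def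
proof (intro allI impI)
  fix w n assume cyc: "ucycle ((`) f ` E) w n"
  define h where "h = inv_into V f"
  have E_Pow: "E \<subseteq> Pow V"
    using ugraph_edges_subset_Pow[OF assms(1)] .
  have preimage_edge: "h ` e' \<in> E" if e': "e' \<in> (`) f ` E" for e'
  proof -
    obtain e where "e \<in> E" "e' = f ` e"
      using e' by blast
    then show ?thesis
      using inv_into_image_cancel[OF assms(2)] E_Pow unfolding h_def by auto
  qed
  have in_image: "w t \<in> f ` V" if t: "t < n" for t
  proof -
    obtain e where "e \<in> E" "{w t, w (Suc t)} = f ` e"
      using cyc t unfolding ucycle_def by blast
    then show ?thesis
      using E_Pow by blast
  qed
  have "ucycle E (h \<circ> w) n"
    unfolding ucycle_def
  proof (intro conjI allI impI)
    show "inj_on (h \<circ> w) {..<n}"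
    proof (rule inj_onI)
      fix a b assume "a \<in> {..<n}" "b \<in> {..<n}" "(h \<circ> w) a = (h \<circ> w) b"
      then have "w a = w b"
        using f_inv_into_f[OF in_image] unfolding h_def by (metis comp_apply lessThan_iff)
      then show "a = b"
        using cyc \<open>a \<in> {..<n}\<close> \<open>b \<in> {..<n}\<close> unfolding ucycle_def by (auto dest: inj_onD)
    qed
    fix t assume "t < n"
    then show "{(h \<circ> w) t, (h \<circ> w) (Suc t)} \<in> E"
      using preimage_edge[of "{w t, w (Suc t)}"] cyc unfolding ucycle_def by simp
  qed (use cyc in \<open>auto simp: ucycle_def\<close>)
  then show "k \<le> n"
    using assms(3) unfolding girth_ge_def by blast
qed

lemma exists_nat_copy:
  fixes V :: "'a set"
  assumes "V \<noteq> {}" "ugraph V E" "regular V E r" "girth_ge E k"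
  shows "\<exists>(V' :: nat set) E'. V' \<noteq> {} \<and> ugraph V' E' \<and> regular V' E' r \<and> girth_ge E' k"
proof -
  have "finite V"
    using assms(2) unfolding ugraph_def by simp
  then obtain f :: "'a \<Rightarrow> nat" where "inj_on f V"
    using finite_imp_inj_to_nat_seg by blast
  then show ?thesis
    using assms
    by (intro exI[of _ "f ` V"] exI[of _ "(`) f ` E"])
      (simp add: ugraph_relabel regular_relabel girth_ge_relabel)
qed

lemma card_filter_lessThan_Suc:
  "card {t. t < Suc m \<and> P t} = card {t. t < m \<and> P t} + (if P m then 1 else 0)"
proof -
  have "{t. t < Suc m \<and> P t} = {t. t < m \<and> P t} \<union> (if P m then {m} else {})"
    by (auto simp: less_Suc_eq)
  then show ?thesis
    by (simp add: card_insert_if)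
qed

lemma sym_diff_iterate_parity:
  assumes "\<And>t. t < m \<Longrightarrow> S (Suc t) = sym_diff (S t) {f t}"
  shows "x \<in> S m \<longleftrightarrow> (x \<in> S 0 \<longleftrightarrow> even (card {t. t < m \<and> f t = x}))"
  using assms
proof (induction m)
  case (Suc m)
  then show ?case
    by (auto simp: card_filter_lessThan_Suc)
qed simp

lemma first_repetition:
  fixes w :: "nat \<Rightarrow> 'a"
  assumes "w n = w 0" and "0 < n"
  obtains i j where "i < j" "j \<le> n" "w i = w j" "inj_on w {..<j}"
proof -
  define P where "P j \<longleftrightarrow> (\<exists>i<j. w i = w j)" for j
  have "P n"
    using assms unfolding P_def by auto
  then obtain j where j: "j \<le> n" "P j" and min: "\<And>j'. j' < j \<Longrightarrow> \<not> P j'"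
    using ex_least_nat_le[of P n] by blast
  have "inj_on w {..<j}"
  proof (rule linorder_inj_onI')
    fix a b assume "a \<in> {..<j}" "b \<in> {..<j}" "a < b"
    then show "w a \<noteq> w b"
      using min[of b] unfolding P_def by auto
  qed
  then show thesis
    using that j unfolding P_def by blast
qed

lemma walk_segment_ucycle:
  assumes ug: "ugraph V E"
    and walk: "\<And>t. t < n \<Longrightarrow> {w t, w (Suc t)} \<in> E"
    and non_backtracking: "\<And>t. t + 2 \<le> n \<Longrightarrow> w (t + 2) \<noteq> w t"
    and "i < j" "j \<le> n" "w i = w j" "inj_on w {i..<j}"
  shows "ucycle E (\<lambda>t. w (i + t)) (j - i)"
  unfolding ucycle_def
proof (intro conjI allI impI)
  have "j \<noteq> Suc i"
    using walk[of i] ugraph_edgeD(1)[OF ug] assms(4-6) by fastforce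
  moreover have "j \<noteq> i + 2"
    using non_backtracking[of i] assms(5,6) by auto
  ultimately show "3 \<le> j - i"
    using assms(4) by linarith
  show "inj_on (\<lambda>t. w (i + t)) {..<j - i}"
    by (rule inj_onI) (use assms(7) in \<open>auto dest: inj_onD\<close>)
qed (use assms walk in auto)

lemma walk_segment_edges_inj:
  assumes non_backtracking: "\<And>t. t + 2 \<le> n \<Longrightarrow> w (t + 2) \<noteq> w t"
    and "j \<le> n" and inj: "inj_on w {i..<j}"
  shows "inj_on (\<lambda>t. {w t, w (Suc t)}) {i..<j}"
proof (rule linorder_inj_onI')
  fix s t assume st: "s \<in> {i..<j}" "t \<in> {i..<j}" "s < t"
  show "{w s, w (Suc s)} \<noteq> {w t, w (Suc t)}"
  proof
    assume "{w s, w (Suc s)} = {w t, w (Suc t)}"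
    then consider "w s = w t" | "w s = w (Suc t)" "w (Suc s) = w t"
      by (auto simp: doubleton_eq_iff)
    then show False
    proof cases
      case 1
      then show False
        using inj st by (auto dest: inj_onD)
    next
      case 2
      show False
      proof (cases "Suc s = t")
        case True
        then show False
          using non_backtracking[of s] 2 st assms(2) by auto
      next
        case False
        then show False
          using inj 2 st by (auto dest: inj_onD)
      qed
    qed
  qed
qed

lemma closed_walk_even_edges_longer_than_girth:
  assumes ug: "ugraph V E" and girth: "girth_ge E k"
    and walk: "\<And>t. t < n \<Longrightarrow> {w t, w (Suc t)} \<in> E"
    and closed: "w n = w 0" "0 < n"
    and non_backtracking: "\<And>t. t + 2 \<le> n \<Longrightarrow> w (t + 2) \<noteq> w t"
    and even_edges: "\<And>e. even (card {t. t < n \<and> {w t, w (Suc t)} = e})"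
  shows "k < n"
proof -
  obtain i j where ij: "i < j" "j \<le> n" "w i = w j" and inj: "inj_on w {..<j}"
    using first_repetition[OF closed] .
  have inj_segment: "inj_on w {i..<j}"
    using inj by (rule inj_on_subset) auto
  have "k \<le> j - i"
    using walk_segment_ucycle[OF ug walk non_backtracking ij inj_segment] girth
    unfolding girth_ge_def by blast
  moreover have "j - i \<noteq> n"
  proof
    assume "j - i = n"
    then have "i = 0" "j = n"
      using ij by auto
    then have "{t. t < n \<and> {w t, w (Suc t)} = {w 0, w 1}} = {0}"
      using walk_segment_edges_inj[OF non_backtracking \<open>j \<le> n\<close> inj_segment] closed(2)
      by (auto simp: inj_on_def)
    then show False
      using even_edges[of "{w 0, w 1}"] by simp
  qed
  ultimately show ?thesis
    using ij by linarith
qed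

definition parity_cover :: "'a set set \<Rightarrow> ('a \<times> 'a set set) set set" where
  "parity_cover E = {{(u, S), (w, sym_diff S {{u, w}})} | u w S. {u, w} \<in> E \<and> S \<subseteq> E}"

lemma parity_cover_edgeD:
  assumes "{p, q} \<in> parity_cover E"
  shows "{fst p, fst q} \<in> E" and "snd q = sym_diff (snd p) {{fst p, fst q}}"
proof -
  obtain u w S where pq: "{p, q} = {(u, S), (w, sym_diff S {{u, w}})}" and "{u, w} \<in> E"
    using assms unfolding parity_cover_def by blast
  then show "{fst p, fst q} \<in> E" "snd q = sym_diff (snd p) {{fst p, fst q}}"
    by (auto simp: doubleton_eq_iff insert_commute)
qed

lemma ugraph_parity_cover:
  assumes "ugraph V E"
  shows "ugraph (V \<times> Pow E) (parity_cover E)"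
  unfolding ugraph_def
proof (intro conjI ballI)
  have "finite V"
    using assms unfolding ugraph_def by simp
  then show "finite (V \<times> Pow E)"
    using ugraph_finite_edges[OF assms] by simp
  fix e assume "e \<in> parity_cover E"
  then obtain u w S where e: "e = {(u, S), (w, sym_diff S {{u, w}})}" "{u, w} \<in> E" "S \<subseteq> E"
    unfolding parity_cover_def by blast
  moreover have "sym_diff S {{u, w}} \<subseteq> E"
    using e(2,3) by auto
  ultimately show "\<exists>p q. e = {p, q} \<and> p \<noteq> q \<and> p \<in> V \<times> Pow E \<and> q \<in> V \<times> Pow E"
    using ugraph_edgeD[OF assms e(2)]
    by (intro exI[of _ "(u, S)"] exI[of _ "(w, sym_diff S {{u, w}})"]) simp
qed

lemma parity_cover_incident_edges:
  assumes "S \<subseteq> E"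
  shows "{e\<in>parity_cover E. (v, S) \<in> e}
    = (\<lambda>w. {(v, S), (w, sym_diff S {{v, w}})}) ` {w. {v, w} \<in> E}"
    (is "_ = ?lift ` _")
proof (intro equalityI subsetI)
  fix e assume e: "e \<in> {e\<in>parity_cover E. (v, S) \<in> e}"
  then obtain u w T where uwT: "e = {(u, T), (w, sym_diff T {{u, w}})}" "{u, w} \<in> E"
    unfolding parity_cover_def by blast
  show "e \<in> ?lift ` {w. {v, w} \<in> E}"
  proof (cases "(v, S) = (u, T)")
    case True
    then show ?thesis
      using uwT by auto
  next
    case False
    then have "v = w" "S = sym_diff T {{u, w}}"
      using e uwT by auto
    then have "e = ?lift u"
      using uwT(1) by (auto simp: insert_commute)
    then show ?thesis
      using uwT(2) \<open>v = w\<close> by (auto simp: insert_commute)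
  qed
next
  fix e assume "e \<in> ?lift ` {w. {v, w} \<in> E}"
  then show "e \<in> {e\<in>parity_cover E. (v, S) \<in> e}"
    using assms unfolding parity_cover_def by blast
qed

lemma regular_parity_cover:
  assumes ug: "ugraph V E" and "regular V E r"
  shows "regular (V \<times> Pow E) (parity_cover E) r"
  unfolding regular_def
proof
  fix p assume "p \<in> V \<times> Pow E"
  then obtain v S where p: "p = (v, S)" "v \<in> V" "S \<subseteq> E"
    by auto
  have "inj_on (\<lambda>w. {(v, S), (w, sym_diff S {{v, w}})}) {w. {v, w} \<in> E}"
    using ugraph_edgeD(1)[OF ug] by (auto simp: inj_on_def doubleton_eq_iff)
  then have "card {e\<in>parity_cover E. p \<in> e} = card {w. {v, w} \<in> E}"
    unfolding p(1) parity_cover_incident_edges[OF p(3)] by (rule card_image)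
  then show "card {e\<in>parity_cover E. p \<in> e} = r"
    using assms(2) p(2) card_incident_edges_eq_card_neighbours[OF ug, of v]
    unfolding regular_def by simp
qed

lemma parity_cover_cycle_non_backtracking:
  assumes cyc: "ucycle (parity_cover E) c n" and t: "t + 2 \<le> n"
  shows "fst (c (t + 2)) \<noteq> fst (c t)"
proof
  assume returns: "fst (c (t + 2)) = fst (c t)"
  have toggle: "snd (c (Suc s)) = sym_diff (snd (c s)) {{fst (c s), fst (c (Suc s))}}"
    if "s < n" for s
    using parity_cover_edgeD(2) cyc that unfolding ucycle_def by blast
  have "snd (c (t + 2)) = snd (c t)"
    using toggle[of t] toggle[of "Suc t"] t returns by (auto simp: numeral_2_eq_2 insert_commute)
  with returns have "c (t + 2) = c t"
    by (simp add: prod_eq_iff)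
  moreover have "c (t + 2) \<noteq> c t"
  proof (cases "t + 2 = n")
    case True
    then show ?thesis
      using cyc unfolding ucycle_def by (auto dest: inj_onD)
  next
    case False
    then show ?thesis
      using cyc t unfolding ucycle_def by (auto dest: inj_onD)
  qed
  ultimately show False
    by contradiction
qed

lemma girth_ge_parity_cover:
  assumes ug: "ugraph V E" and girth: "girth_ge E k"
  shows "girth_ge (parity_cover E) (Suc k)"
  unfolding girth_ge_def
proof (intro allI impI)
  fix c n assume cyc: "ucycle (parity_cover E) c n"
  then have n3: "3 \<le> n" and closed: "c n = c 0"
    and cover_edge: "\<And>t. t < n \<Longrightarrow> {c t, c (Suc t)} \<in> parity_cover E"
    unfolding ucycle_def by auto
  define w where "w t = fst (c t)" for t
  define S where "S t = snd (c t)" for t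
  have walk: "{w t, w (Suc t)} \<in> E"
    and toggle: "S (Suc t) = sym_diff (S t) {{w t, w (Suc t)}}" if "t < n" for t
    using parity_cover_edgeD[OF cover_edge[OF that]] unfolding w_def S_def by auto
  have even_edges: "even (card {t. t < n \<and> {w t, w (Suc t)} = e})" for e
    using sym_diff_iterate_parity[of n S "\<lambda>t. {w t, w (Suc t)}" e] toggle closed
    unfolding S_def by auto
  have "w n = w 0"
    using closed unfolding w_def by simp
  then show "Suc k \<le> n"
    using closed_walk_even_edges_longer_than_girth[of V E k n w] ug girth walk
      parity_cover_cycle_non_backtracking[OF cyc] even_edges n3 unfolding w_def by simp
qed

lemma exists_regular_graph_girth_ge:
  "\<exists>(V :: nat set) E. V \<noteq> {} \<and> ugraph V E \<and> regular V E r \<and> girth_ge E k"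
proof (induction k)
  case 0
  have "ugraph {..r} (complete_graph {..r})" "regular {..r} (complete_graph {..r}) r"
    using ugraph_complete_graph regular_complete_graph[of "{..r}"] by auto
  then show ?case
    unfolding girth_ge_def by blast
next
  case (Suc k)
  then obtain V :: "nat set" and E where G: "V \<noteq> {}" "ugraph V E" "regular V E r" "girth_ge E k"
    by blast
  show ?case
  proof (rule exists_nat_copy[where E = "parity_cover E"])
    show "V \<times> Pow E \<noteq> {}"
      using G(1) by auto
  qed (use G in \<open>simp_all add: ugraph_parity_cover regular_parity_cover girth_ge_parity_cover\<close>)
qed

definition layer_vertex :: "nat \<Rightarrow> nat \<Rightarrow> nat \<Rightarrow> nat" where
  "layer_vertex i a x = prod_encode (i, prod_encode (a, x))"

lemma layer_vertex_eq_iff [simp]: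
  "layer_vertex i a x = layer_vertex i' a' x' \<longleftrightarrow> i = i' \<and> a = a' \<and> x = x'"
  unfolding layer_vertex_def by (simp add: prod_encode_eq)

lemma inj_layer_vertex: "inj (layer_vertex i a)"
  by (simp add: inj_def)

definition layered_vertices :: "nat \<Rightarrow> nat \<Rightarrow> nat set \<Rightarrow> nat set" where
  "layered_vertices g z X = {layer_vertex i a x | i a x. i < g \<and> a < z \<and> x \<in> X}"

definition layered_edges :: "nat \<Rightarrow> nat \<Rightarrow> nat set set \<Rightarrow> nat set set" where
  "layered_edges g z EG =
     {{layer_vertex i a x, layer_vertex i a y} | i a x y. i < g \<and> a < z \<and> {x, y} \<in> EG}"

definition layered_arcs :: "nat \<Rightarrow> nat \<Rightarrow> nat set \<Rightarrow> (nat \<times> nat) set" where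
  "layered_arcs g z X =
     {(layer_vertex i a x, layer_vertex (Suc i mod g) b x) | i a b x.
        i < g \<and> a < z \<and> b < z \<and> x \<in> X}"

lemma Suc_mod_eq_Suc_mod_iff:
  fixes i j g :: nat
  assumes "i < g" "j < g"
  shows "Suc i mod g = Suc j mod g \<longleftrightarrow> i = j"
  using assms by (cases "Suc i = g"; cases "Suc j = g") auto

lemma mixed_graph_layered:
  assumes ug: "ugraph X EG" and "2 \<le> g"
  shows "mixed_graph (layered_vertices g z X) (layered_edges g z EG) (layered_arcs g z X)"
  unfolding mixed_graph_def
proof (intro conjI ballI)
  have "layered_vertices g z X = (\<lambda>(i, a, x). layer_vertex i a x) ` ({..<g} \<times> {..<z} \<times> X)"
    unfolding layered_vertices_def by (auto simp: image_iff)
  then show "finite (layered_vertices g z X)"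
    using ug unfolding ugraph_def by simp
next
  fix e assume "e \<in> layered_edges g z EG"
  then obtain i a x y
    where e: "e = {layer_vertex i a x, layer_vertex i a y}" "i < g" "a < z" "{x, y} \<in> EG"
    unfolding layered_edges_def by blast
  have "layer_vertex i a x \<in> layered_vertices g z X" "layer_vertex i a y \<in> layered_vertices g z X"
    using e ugraph_edgeD(2,3)[OF ug e(4)] unfolding layered_vertices_def by blast+
  then show "\<exists>u v. e = {u, v} \<and> u \<noteq> v \<and> u \<in> layered_vertices g z X \<and> v \<in> layered_vertices g z X"
    using e ugraph_edgeD(1)[OF ug e(4)]
    by (intro exI[of _ "layer_vertex i a x"] exI[of _ "layer_vertex i a y"]) simp
next
  fix p assume "p \<in> layered_arcs g z X"
  then obtain i a b x where p: "p = (layer_vertex i a x, layer_vertex (Suc i mod g) b x)"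
    "i < g" "a < z" "b < z" "x \<in> X"
    unfolding layered_arcs_def by blast
  have "Suc i mod g \<noteq> i" "Suc i mod g < g"
    using p(2) assms(2) by (cases "Suc i = g"; auto)+
  then show "case p of (u, v) \<Rightarrow> u \<noteq> v \<and> u \<in> layered_vertices g z X \<and> v \<in> layered_vertices g z X"
    using p unfolding layered_vertices_def by auto
qed

lemma card_layered_out_arcs:
  assumes "i < g" "a < z" "x \<in> X"
  shows "card {w. (layer_vertex i a x, w) \<in> layered_arcs g z X} = z"
proof -
  have "{w. (layer_vertex i a x, w) \<in> layered_arcs g z X}
      = (\<lambda>b. layer_vertex (Suc i mod g) b x) ` {..<z}"
    using assms unfolding layered_arcs_def by auto
  then show ?thesis
    by (simp add: card_image inj_on_def)
qed

lemma card_layered_in_arcs: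
  assumes "i < g" "a < z" "x \<in> X"
  shows "card {w. (w, layer_vertex i a x) \<in> layered_arcs g z X} = z"
proof -
  obtain j where j: "j < g" "Suc j mod g = i"
  proof (cases i)
    case 0
    then show thesis
      using that[of "g - 1"] assms(1) by simp
  next
    case (Suc j)
    then show thesis
      using that[of j] assms(1) by simp
  qed
  have "{w. (w, layer_vertex i a x) \<in> layered_arcs g z X} = (\<lambda>b. layer_vertex j b x) ` {..<z}"
  proof (intro equalityI subsetI)
    fix w assume "w \<in> {w. (w, layer_vertex i a x) \<in> layered_arcs g z X}"
    then obtain i' b where "w = layer_vertex i' b x" "b < z" "i' < g" "Suc i' mod g = i"
      unfolding layered_arcs_def by auto
    then show "w \<in> (\<lambda>b. layer_vertex j b x) ` {..<z}"
      using Suc_mod_eq_Suc_mod_iff[OF _ j(1), of i'] j(2) by auto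
  next
    fix w assume "w \<in> (\<lambda>b. layer_vertex j b x) ` {..<z}"
    then obtain b where "w = layer_vertex j b x" "b < z"
      by blast
    then show "w \<in> {w. (w, layer_vertex i a x) \<in> layered_arcs g z X}"
      using assms j unfolding layered_arcs_def by blast
  qed
  then show ?thesis
    by (simp add: card_image inj_on_def)
qed

lemma card_layered_incident_edges:
  assumes ug: "ugraph X EG" and "regular X EG r" and "i < g" "a < z" "x \<in> X"
  shows "card {e\<in>layered_edges g z EG. layer_vertex i a x \<in> e} = r"
proof -
  have "{e\<in>layered_edges g z EG. layer_vertex i a x \<in> e} = (`) (layer_vertex i a) ` {e\<in>EG. x \<in> e}"
  proof (intro equalityI subsetI)
    fix e assume e: "e \<in> {e\<in>layered_edges g z EG. layer_vertex i a x \<in> e}"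
    then obtain i' a' x' y'
      where e': "e = {layer_vertex i' a' x', layer_vertex i' a' y'}" "{x', y'} \<in> EG"
      unfolding layered_edges_def by blast
    then have "i' = i" "a' = a" "x \<in> {x', y'}"
      using e by auto
    then show "e \<in> (`) (layer_vertex i a) ` {e\<in>EG. x \<in> e}"
      using e' by (intro image_eqI[of _ _ "{x', y'}"]) auto
  next
    fix e assume "e \<in> (`) (layer_vertex i a) ` {e\<in>EG. x \<in> e}"
    then obtain e' where e': "e = layer_vertex i a ` e'" "e' \<in> EG" "x \<in> e'"
      by blast
    from ug e'(2) obtain x' y' where "e' = {x', y'}"
      unfolding ugraph_def by blast
    then show "e \<in> {e\<in>layered_edges g z EG. layer_vertex i a x \<in> e}"
      using e' assms unfolding layered_edges_def by auto
  qed
  moreover have "inj_on ((`) (layer_vertex i a)) {e\<in>EG. x \<in> e}"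
    using inj_layer_vertex by (simp add: inj_on_def inj_image_eq_iff)
  ultimately show ?thesis
    using assms(2,5) unfolding regular_def by (simp add: card_image)
qed

fun is_arc :: "'a link \<Rightarrow> bool" where
  "is_arc (Arc _) = True"
| "is_arc (Edg _) = False"

lemma is_cycle_closed:
  assumes "is_cycle E A vs ls"
  shows "vs ! length ls = vs ! 0"
proof -
  have "vs \<noteq> []" "length vs = Suc (length ls)"
    using assms unfolding is_cycle_def by auto
  then show ?thesis
    using assms unfolding is_cycle_def by (simp add: hd_conv_nth last_conv_nth)
qed

lemma is_cycle_of_length_two_has_arc:
  assumes cyc: "is_cycle E A vs ls" and two: "length ls = 2"
  shows "\<exists>t < 2. is_arc (ls ! t)"
proof (rule ccontr)
  assume "\<not> ?thesis"
  then have "ls ! t = Edg {vs ! t, vs ! Suc t}" if "t < 2" for t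
    using cyc that two unfolding is_cycle_def link_step_def by (cases "ls ! t") auto
  then have "ls ! 0 = ls ! 1"
    using is_cycle_closed[OF cyc] two by (simp add: numeral_2_eq_2 insert_commute)
  then show False
    using cyc two unfolding is_cycle_def by (simp add: nth_eq_iff_index_eq)
qed

lemma layered_edge_step:
  assumes "link_step (layered_edges g z EG) A l u v" and "\<not> is_arc l"
  shows "l = Edg {u, v}
    \<and> (\<exists>i a x y. i < g \<and> u = layer_vertex i a x \<and> v = layer_vertex i a y \<and> {x, y} \<in> EG)"
proof -
  have l: "l = Edg {u, v}" and "{u, v} \<in> layered_edges g z EG"
    using assms unfolding link_step_def by auto
  then obtain i a x y
    where "{u, v} = {layer_vertex i a x, layer_vertex i a y}" "i < g" "{x, y} \<in> EG"
    unfolding layered_edges_def by blast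
  moreover have "{y, x} \<in> EG"
    using \<open>{x, y} \<in> EG\<close> by (simp add: insert_commute)
  ultimately show ?thesis
    using l by (auto simp: doubleton_eq_iff)
qed

lemma layered_arc_step:
  assumes "link_step E (layered_arcs g z X) l u v" and "is_arc l"
  shows "\<exists>i a b x. i < g \<and> u = layer_vertex i a x \<and> v = layer_vertex (Suc i mod g) b x"
proof -
  have "(u, v) \<in> layered_arcs g z X"
    using assms unfolding link_step_def by auto
  then show ?thesis
    unfolding layered_arcs_def by blast
qed

lemma layered_cycle_layer:
  assumes cyc: "is_cycle (layered_edges g z EG) (layered_arcs g z X) vs ls"
    and v0: "vs ! 0 = layer_vertex i0 a0 x0" "i0 < g"
    and "m \<le> length ls"
  shows "\<exists>a x. vs ! m = layer_vertex ((i0 + card {t. t < m \<and> is_arc (ls ! t)}) mod g) a x"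
  using assms(4)
proof (induction m)
  case 0
  then show ?case
    using v0 by auto
next
  case (Suc m)
  then obtain a x
    where IH: "vs ! m = layer_vertex ((i0 + card {t. t < m \<and> is_arc (ls ! t)}) mod g) a x"
    by auto
  have step: "link_step (layered_edges g z EG) (layered_arcs g z X) (ls ! m) (vs ! m) (vs ! Suc m)"
    using cyc Suc.prems unfolding is_cycle_def by simp
  show ?case
  proof (cases "is_arc (ls ! m)")
    case True
    then obtain i a' b x'
      where "vs ! m = layer_vertex i a' x'" "vs ! Suc m = layer_vertex (Suc i mod g) b x'"
      using layered_arc_step[OF step] by blast
    then show ?thesis
      using IH True by (auto simp: card_filter_lessThan_Suc mod_Suc_eq)
  next
    case False
    then obtain i a' x' y where "vs ! m = layer_vertex i a' x'" "vs ! Suc m = layer_vertex i a' y"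
      using layered_edge_step[OF step] by blast
    then show ?thesis
      using IH False by (auto simp: card_filter_lessThan_Suc)
  qed
qed

lemma layered_cycle_with_arc_length:
  assumes cyc: "is_cycle (layered_edges g z EG) (layered_arcs g z X) vs ls"
    and arc: "k < length ls" "is_arc (ls ! k)"
  shows "g \<le> length ls"
proof -
  define n where "n = length ls"
  define arcs where "arcs = card {t. t < n \<and> is_arc (ls ! t)}"
  have "0 < n"
    using arc unfolding n_def by linarith
  then have step: "link_step (layered_edges g z EG) (layered_arcs g z X) (ls ! 0) (vs ! 0) (vs ! 1)"
    using cyc unfolding is_cycle_def n_def by simp
  obtain i0 a0 x0 where v0: "vs ! 0 = layer_vertex i0 a0 x0" "i0 < g"
  proof (cases "is_arc (ls ! 0)")
    case True
    then show thesis
      using layered_arc_step[OF step] that by blast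
  next
    case False
    then show thesis
      using layered_edge_step[OF step] that by blast
  qed
  obtain a x where "vs ! n = layer_vertex ((i0 + arcs) mod g) a x"
    using layered_cycle_layer[OF cyc v0, of n] unfolding n_def arcs_def by blast
  then have "(i0 + arcs) mod g = i0 mod g"
    using is_cycle_closed[OF cyc] v0 unfolding n_def by simp
  then have "g dvd arcs"
    using mod_eq_dvd_iff_nat[of i0 "i0 + arcs" g] by simp
  moreover have "k \<in> {t. t < n \<and> is_arc (ls ! t)}"
    using arc unfolding n_def by simp
  then have "arcs \<noteq> 0"
    unfolding arcs_def by (auto simp: card_eq_0_iff)
  ultimately have "g \<le> arcs"
    by (simp add: dvd_imp_le)
  also have "arcs \<le> n"
    unfolding arcs_def by (rule order_trans[OF card_mono[of "{..<n}"]]) auto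
  finally show ?thesis
    unfolding n_def .
qed

lemma layered_cycle_without_arc_in_one_copy:
  assumes cyc: "is_cycle (layered_edges g z EG) A vs ls"
    and no_arc: "\<And>t. t < length ls \<Longrightarrow> \<not> is_arc (ls ! t)"
  obtains i a xs where "\<And>m. m \<le> length ls \<Longrightarrow> vs ! m = layer_vertex i a (xs m)"
    and "\<And>t. t < length ls \<Longrightarrow> {xs t, xs (Suc t)} \<in> EG"
proof -
  have step: "\<exists>i a x y. vs ! t = layer_vertex i a x \<and> vs ! Suc t = layer_vertex i a y \<and> {x, y} \<in> EG"
    if "t < length ls" for t
    using layered_edge_step[of g z EG A "ls ! t"] cyc no_arc that
    unfolding is_cycle_def by blast
  have "0 < length ls"
    using cyc unfolding is_cycle_def by auto
  then obtain i a x0 where "vs ! 0 = layer_vertex i a x0"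
    using step[of 0] by auto
  then have same_copy: "\<exists>x. vs ! m = layer_vertex i a x" if "m \<le> length ls" for m
    using that
  proof (induction m)
    case (Suc m)
    then show ?case
      using step[of m] by auto
  qed auto
  define xs where "xs m = inv (layer_vertex i a) (vs ! m)" for m
  have vs_xs: "vs ! m = layer_vertex i a (xs m)" if "m \<le> length ls" for m
    using same_copy[OF that] unfolding xs_def by (auto simp: inv_f_f[OF inj_layer_vertex])
  moreover have "{xs t, xs (Suc t)} \<in> EG" if "t < length ls" for t
    using step[OF that] vs_xs[of t] vs_xs[of "Suc t"] that by auto
  ultimately show thesis
    using that by blast
qed

lemma layered_cycle_without_arc_length:
  assumes ug: "ugraph X EG" and girth: "girth_ge EG g"
    and cyc: "is_cycle (layered_edges g z EG) A vs ls"
    and no_arc: "\<And>t. t < length ls \<Longrightarrow> \<not> is_arc (ls ! t)"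
  shows "g \<le> length ls"
proof -
  define n where "n = length ls"
  have n: "1 \<le> n" "length vs = Suc n" and distinct: "distinct (butlast vs)"
    using cyc unfolding is_cycle_def n_def by auto
  obtain i a xs where vs_xs: "\<And>m. m \<le> n \<Longrightarrow> vs ! m = layer_vertex i a (xs m)"
    and edge: "\<And>t. t < n \<Longrightarrow> {xs t, xs (Suc t)} \<in> EG"
    using layered_cycle_without_arc_in_one_copy[OF cyc no_arc] unfolding n_def by blast
  have closed: "xs n = xs 0"
    using is_cycle_closed[OF cyc] vs_xs[of n] vs_xs[of 0] unfolding n_def by simp
  have "n \<noteq> 1"
  proof
    assume "n = 1"
    then have "{xs 0, xs 0} \<in> EG"
      using edge[of 0] closed by simp
    then show False
      using ugraph_edgeD(1)[OF ug] by blast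
  qed
  moreover have "n \<noteq> 2"
    using is_cycle_of_length_two_has_arc[OF cyc] no_arc unfolding n_def by force
  moreover have "inj_on xs {..<n}"
  proof (rule inj_onI)
    fix s t assume st: "s \<in> {..<n}" "t \<in> {..<n}" "xs s = xs t"
    then have "butlast vs ! s = butlast vs ! t"
      using vs_xs[of s] vs_xs[of t] n(2) by (simp add: nth_butlast)
    then show "s = t"
      using distinct st n(2) by (simp add: nth_eq_iff_index_eq)
  qed
  ultimately have "ucycle EG xs n"
    unfolding ucycle_def using n(1) closed edge by auto
  then show ?thesis
    using girth unfolding girth_ge_def n_def by blast
qed

lemma layered_arc_cycle:
  assumes "x \<in> X" "0 < z" "0 < g"
  defines "vs \<equiv> map (\<lambda>t. layer_vertex (t mod g) 0 x) [0..<Suc g]"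
    and "ls \<equiv> map (\<lambda>t. Arc (layer_vertex (t mod g) 0 x, layer_vertex (Suc t mod g) 0 x)) [0..<g]"
  shows "is_cycle E (layered_arcs g z X) vs ls"
  unfolding is_cycle_def
proof (intro conjI allI impI)
  have "butlast vs = map (\<lambda>t. layer_vertex (t mod g) 0 x) [0..<g]"
    unfolding vs_def by (simp add: map_butlast[symmetric])
  moreover have "inj_on (\<lambda>t. layer_vertex (t mod g) 0 x) {0..<g}"
    by (simp add: inj_on_def)
  ultimately show "distinct (butlast vs)"
    by (simp add: distinct_map)
  show "distinct ls"
    unfolding ls_def by (simp add: distinct_map inj_on_def)
  fix t assume "t < length ls"
  then have "t < g"
    unfolding ls_def by simp
  then have "ls ! t = Arc (vs ! t, vs ! Suc t)" "(vs ! t, vs ! Suc t) \<in> layered_arcs g z X"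
    using assms(1-3) unfolding ls_def vs_def layered_arcs_def
    by (auto simp del: upt_Suc simp: mod_Suc_eq)
  then show "link_step E (layered_arcs g z X) (ls ! t) (vs ! t) (vs ! Suc t)"
    unfolding link_step_def by simp
qed (use assms(3) in \<open>auto simp: vs_def ls_def hd_map last_map simp del: upt_Suc\<close>)

lemma has_girth_layered:
  assumes "ugraph X EG" and "girth_ge EG g" and "X \<noteq> {}" and "0 < z" and "0 < g"
  shows "has_girth (layered_edges g z EG) (layered_arcs g z X) g"
  unfolding has_girth_def
proof (intro conjI allI impI)
  obtain x where x: "x \<in> X"
    using assms(3) by blast
  let ?vs = "map (\<lambda>t. layer_vertex (t mod g) 0 x) [0..<Suc g]"
    and ?ls = "map (\<lambda>t. Arc (layer_vertex (t mod g) 0 x, layer_vertex (Suc t mod g) 0 x)) [0..<g]"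
  have "is_cycle (layered_edges g z EG) (layered_arcs g z X) ?vs ?ls"
    by (rule layered_arc_cycle[OF x assms(4,5)])
  moreover have "length ?ls = g"
    by simp
  ultimately show
    "\<exists>vs ls. is_cycle (layered_edges g z EG) (layered_arcs g z X) vs ls \<and> length ls = g"
    by blast
next
  fix vs ls assume cyc: "is_cycle (layered_edges g z EG) (layered_arcs g z X) vs ls"
  show "g \<le> length ls"
  proof (cases "\<exists>t < length ls. is_arc (ls ! t)")
    case True
    then obtain t where "t < length ls" "is_arc (ls ! t)"
      by blast
    then show ?thesis
      by (rule layered_cycle_with_arc_length[OF cyc])
  next
    case False
    then show ?thesis
      using layered_cycle_without_arc_length[OF assms(1,2) cyc] by blast
  qed
qed

theorem theorem1:
  fixes z r g :: nat
  assumes "1 \<le> z" and "1 \<le> r" and "3 \<le> g"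
  shows "\<exists>(V :: nat set) E A. zrg_mixed_graph z r g V E A"
proof -
  obtain X :: "nat set" and EG where G: "X \<noteq> {}" "ugraph X EG" "regular X EG r" "girth_ge EG g"
    using exists_regular_graph_girth_ge[where r = r and k = g] by blast
  let ?V = "layered_vertices g z X" and ?E = "layered_edges g z EG" and ?A = "layered_arcs g z X"
  have "mixed_graph ?V ?E ?A"
    using mixed_graph_layered[OF G(2)] assms(3) by simp
  moreover have "card {w. (v, w) \<in> ?A} = z \<and> card {w. (w, v) \<in> ?A} = z \<and> card {e\<in>?E. v \<in> e} = r"
    if v: "v \<in> ?V" for v
  proof -
    obtain i a x where "v = layer_vertex i a x" "i < g" "a < z" "x \<in> X"
      using v unfolding layered_vertices_def by blast
    then show ?thesis
      using card_layered_out_arcs card_layered_in_arcs card_layered_incident_edges[OF G(2,3)]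
      by simp
  qed
  moreover have "has_girth ?E ?A g"
    using has_girth_layered[OF G(2,4,1)] assms by simp
  ultimately show ?thesis
    unfolding zrg_mixed_graph_def by blast
qed

end
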